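(* Let $X$ be a compact metric space and $F_1,F_2$ two $k$-iterated contraction systems on $X$ (possibly with different attractors), $F_2$ having contraction ratio $\theta\in(0,1)$. Let $A_1,A_2:X\to\mathbb{R}$ be potentials normalized with respect to $F_1$ and $F_2$ respectively, with $A_2$ Lipschitz, and let $\mu_i$ be the Gibbs measure of $(F_i,A_i)$, i.e. the unique Borel probability measure on $X$ with $\mathscr{L}_i^*\mu_i=\mu_i$. Let $C>0$, $\lambda\in(0,1)$ be constants, depending only on $\operatorname{diam}X$, $\theta$ and $\operatorname{Lip}(A_2)$, such that $W_1((\mathscr{L}_2^* )^n\mu,(\mathscr{L}_2^* )^n\nu)\le C\lambda^nW_1(\mu,\nu)$ for all $n$ and all Borel probability measures $\mu,\nu$ on $X$. Then \[W_1(\mu_1,\mu_2)\le\frac{C}{1-\lambda}\Big(\operatorname{diam}X\cdot\|A_1-A_2\|_\infty+(\operatorname{Lip}(A_2)\operatorname{diam}X+1)\,d_\infty(F_1,F_2)\Big).\]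
   Context: A $k$-multiset is an unordered list of $k$ elements with repetitions allowed; sums over it count multiplicities. A $k$-iterated contraction system (ICS) on $X$ with contraction ratio $\theta$ assigns to each $x\in X$ a $k$-multiset $F(x)$ of points of $X$ such that for all $x,y$ there are enumerations $F(x)=\{x_1,\dots,x_k\}$, $F(y)=\{y_1,\dots,y_k\}$ with $d(x_i,y_i)\le\theta d(x,y)$. $A_i$ normalized w.r.t. $F_i$ means $\sum_{y\in F_i(x)}e^{A_i(y)}=1$ for all $x$. $\mathscr{L}_if(x)=\sum_{y\in F_i(x)}e^{A_i(y)}f(y)$ and $\mathscr{L}_i^*$ is its dual on measures. $d_\infty(F_1,F_2)=\sup_{x\in X}\inf\sup_jd(y_1^j,y_2^j)$, the infimum over all bijections (enumerations) $F_1(x)=\{y_1^j\}_{j\le k}$, $F_2(x)=\{y_2^j\}_{j\le k}$. $W_1$ is the 1-Wasserstein distance. *)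

theory Defs
  imports "HOL-Probability.Probability" "HOL-Library.Multiset"
begin

definition prob_on :: "'a::metric_space set \<Rightarrow> 'a measure \<Rightarrow> bool" where
  "prob_on X M \<longleftrightarrow> prob_space M \<and> sets M = sets (restrict_space borel X)"

definition is_ICS :: "'a::metric_space set \<Rightarrow> nat \<Rightarrow> real \<Rightarrow> ('a \<Rightarrow> 'a multiset) \<Rightarrow> bool" where
  "is_ICS X k \<theta> F \<longleftrightarrow>
     (\<forall>x\<in>X. size (F x) = k \<and> set_mset (F x) \<subseteq> X) \<and>
     (\<forall>x\<in>X. \<forall>y\<in>X. \<exists>xs ys. mset xs = F x \<and> mset ys = F y \<and>
         (\<forall>i<k. dist (xs ! i) (ys ! i) \<le> \<theta> * dist x y))"

definition normalized :: "'a set \<Rightarrow> ('a \<Rightarrow> 'a multiset) \<Rightarrow> ('a \<Rightarrow> real) \<Rightarrow> bool" where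
  "normalized X F A \<longleftrightarrow> (\<forall>x\<in>X. (\<Sum>y\<in>#F x. exp (A y)) = 1)"

definition dual_transfer :: "'a::metric_space set \<Rightarrow> ('a \<Rightarrow> 'a multiset) \<Rightarrow> ('a \<Rightarrow> real)
    \<Rightarrow> 'a measure \<Rightarrow> 'a measure" where
  "dual_transfer X F A \<mu> = measure_of X (sets (restrict_space borel X))
     (\<lambda>B. \<integral>\<^sup>+ x. (\<Sum>y\<in>#F x. ennreal (exp (A y)) * indicator B y) \<partial>\<mu>)"

text \<open>1-Wasserstein distance (Kantorovich-Rubinstein dual form).\<close>
definition W1 :: "'a::metric_space set \<Rightarrow> 'a measure \<Rightarrow> 'a measure \<Rightarrow> real" where
  "W1 X \<mu> \<nu> = (SUP f \<in> {f. 1-lipschitz_on X f}. (\<integral>x. f x \<partial>\<mu>) - (\<integral>x. f x \<partial>\<nu>))"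

definition Lip :: "'a::metric_space set \<Rightarrow> ('a \<Rightarrow> real) \<Rightarrow> real" where
  "Lip X A = Inf {L. L-lipschitz_on X A}"

definition d_infty :: "'a::metric_space set \<Rightarrow> ('a \<Rightarrow> 'a multiset) \<Rightarrow> ('a \<Rightarrow> 'a multiset) \<Rightarrow> real" where
  "d_infty X F1 F2 = (SUP x\<in>X. Inf {(MAX j\<in>{..<length xs}. dist (xs ! j) (ys ! j)) | xs ys.
        mset xs = F1 x \<and> mset ys = F2 x})"

end

theory Submission
  imports Defs
begin

(*
  Write T for the dual transfer operator of (F2, A2). As mu2 is fixed by T and the iterates
  of T contract W1 geometrically, a telescoping sum gives
  W1(mu1, mu2) <= C / (1 - lam) * W1(mu1, T mu1).

  To bound W1(mu1, T mu1), test against a 1-Lipschitz f, shifted to take values in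
  [0, diam X]. Since mu1 is fixed by the transfer operator of (F1, A1), the integral of f
  against mu1 is at most that of x |-> sum of e^(A1 y) f(y) over y in F1 x, while the integral
  against T mu1 equals that of the corresponding sum over F2 x. Pair enumerations of F1 x and
  F2 x whose points are within d_infty + eps of each other: the weights e^A1 and e^A2 then
  differ by relative factors e^N - 1 and e^(Lip(A2) (d_infty + eps)) - 1, costing at most
  diam X * (N + Lip(A2) (d_infty + eps)), and the values of f differ by at most d_infty + eps.
  If N >= 1 or Lip(A2) d_infty >= 1, the trivial bound diam X already suffices.

  As A1 need not be continuous, the transfer operator of (F1, A1) is only controlled on
  indicators, which yields an inequality for mu1.
*)

lemma sum_mset_eq_sum_nth:
  assumes "mset xs = M"
  shows "(\<Sum>y\<in>#M. f y) = (\<Sum>j<length xs. f (xs ! j))"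
proof -
  have "(\<Sum>y\<in>#M. f y) = sum_list (map f xs)"
    using assms[symmetric] by (metis mset_map sum_mset_sum_list)
  also have "\<dots> = (\<Sum>j<length xs. f (xs ! j))"
    by (simp add: sum_list_sum_nth atLeast0LessThan)
  finally show ?thesis .
qed

lemma sum_mset_nonneg:
  fixes f :: "'a \<Rightarrow> 'b::ordered_comm_monoid_add"
  shows "(\<And>y. y \<in># M \<Longrightarrow> 0 \<le> f y) \<Longrightarrow> 0 \<le> (\<Sum>y\<in>#M. f y)"
  by (induction M) auto

lemma ennreal_sum_mset:
  "(\<And>y. y \<in># M \<Longrightarrow> 0 \<le> f y) \<Longrightarrow> (\<Sum>y\<in>#M. ennreal (f y)) = ennreal (\<Sum>y\<in>#M. f y)"
  by (induction M) (simp_all add: sum_mset_nonneg)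

lemma ennreal_sum_mset_mult:
  "(\<And>y. y \<in># M \<Longrightarrow> 0 \<le> w y) \<Longrightarrow> (\<And>y. y \<in># M \<Longrightarrow> 0 \<le> g y) \<Longrightarrow>
    (\<Sum>y\<in>#M. ennreal (w y) * ennreal (g y)) = ennreal (\<Sum>y\<in>#M. w y * g y)"
  by (induction M) (simp_all add: ennreal_mult sum_mset_nonneg)

lemma tendsto_sum_mset:
  fixes \<phi> :: "nat \<Rightarrow> 'a \<Rightarrow> real"
  shows "(\<And>y. y \<in># M \<Longrightarrow> (\<lambda>n. \<phi> n y) \<longlonglongrightarrow> l y) \<Longrightarrow>
    (\<lambda>n. \<Sum>y\<in>#M. \<phi> n y) \<longlonglongrightarrow> (\<Sum>y\<in>#M. l y)"
  by (induction M) (auto intro!: tendsto_add)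

lemma is_ICS_image:
  assumes "is_ICS X k \<theta> F" "x \<in> X"
  shows "size (F x) = k" "set_mset (F x) \<subseteq> X"
  using assms unfolding is_ICS_def by auto

lemma is_ICS_enumeration:
  assumes "is_ICS X k \<theta> F" "x \<in> X" "mset xs = F x"
  shows "length xs = k" "set xs \<subseteq> X"
  using is_ICS_image[OF assms(1,2)] assms(3) by (metis size_mset, metis set_mset_mset)

lemma is_ICS_pairing:
  assumes "is_ICS X k \<theta> F" "x \<in> X" "x' \<in> X"
  obtains xs ys where "mset xs = F x" "mset ys = F x'" "length xs = k" "length ys = k"
    "set xs \<subseteq> X" "set ys \<subseteq> X" "\<And>i. i < k \<Longrightarrow> dist (xs ! i) (ys ! i) \<le> \<theta> * dist x x'"
proof -
  from assms obtain xs ys where "mset xs = F x" "mset ys = F x'"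
    "\<forall>i<k. dist (xs ! i) (ys ! i) \<le> \<theta> * dist x x'"
    unfolding is_ICS_def by blast
  with is_ICS_enumeration[OF assms(1,2)] is_ICS_enumeration[OF assms(1,3)] that show ?thesis
    by blast
qed

lemma is_ICS_normalized_pos:
  assumes "is_ICS X k \<theta> F" and "normalized X F A" and "X \<noteq> {}"
  shows "0 < k"
proof -
  obtain x where x: "x \<in> X" using \<open>X \<noteq> {}\<close> by blast
  then have "(\<Sum>y\<in>#F x. exp (A y)) = 1" using assms(2) by (simp add: normalized_def)
  then show ?thesis using is_ICS_image(1)[OF assms(1) x] by (cases k) auto
qed

lemma continuous_on_sum_mset_ICS:
  fixes \<psi> :: "'a::metric_space \<Rightarrow> real"
  assumes ics: "is_ICS X k \<theta> F" and "0 \<le> \<theta>" and "compact X" and "continuous_on X \<psi>"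
  shows "continuous_on X (\<lambda>x. \<Sum>y\<in>#F x. \<psi> y)"
  unfolding continuous_on_iff
proof (intro ballI allI impI)
  fix x and e :: real assume x: "x \<in> X" and e: "0 < e"
  have "uniformly_continuous_on X \<psi>"
    using assms(4,3) by (rule compact_uniformly_continuous)
  moreover have "0 < e / (k + 1)" using e by simp
  ultimately obtain \<delta> where \<delta>: "\<delta> > 0"
    "\<And>a b. a \<in> X \<Longrightarrow> b \<in> X \<Longrightarrow> dist a b < \<delta> \<Longrightarrow> dist (\<psi> a) (\<psi> b) < e / (k + 1)"
    unfolding uniformly_continuous_on_def by metis
  define d where "d = \<delta> / (\<theta> + 1)"
  have d: "0 < d" "\<theta> * d < \<delta>"
    using \<delta>(1) assms(2) by (simp_all add: d_def field_simps)
  show "\<exists>d>0. \<forall>x'\<in>X. dist x' x < d \<longrightarrow> dist (\<Sum>y\<in>#F x'. \<psi> y) (\<Sum>y\<in>#F x. \<psi> y) < e"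
  proof (intro exI[of _ d] conjI ballI impI d(1))
    fix x' assume x': "x' \<in> X" and dx: "dist x' x < d"
    obtain xs ys where L: "mset xs = F x'" "mset ys = F x" "length xs = k" "length ys = k"
      "set xs \<subseteq> X" "set ys \<subseteq> X" "\<And>i. i < k \<Longrightarrow> dist (xs ! i) (ys ! i) \<le> \<theta> * dist x' x"
      using is_ICS_pairing[OF ics x' x] by blast
    have close: "\<bar>\<psi> (xs ! j) - \<psi> (ys ! j)\<bar> \<le> e / (k + 1)" if j: "j < k" for j
    proof -
      have "dist (xs ! j) (ys ! j) \<le> \<theta> * d"
        using L(7)[OF j] dx assms(2) by (meson less_imp_le mult_left_mono order_trans)
      then have "dist (xs ! j) (ys ! j) < \<delta>" using d(2) by linarith
      moreover have "xs ! j \<in> X" "ys ! j \<in> X" using L(3-6) j by (auto intro: nth_mem)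
      ultimately show ?thesis using \<delta>(2) by (fastforce simp: dist_real_def)
    qed
    have "dist (\<Sum>y\<in>#F x'. \<psi> y) (\<Sum>y\<in>#F x. \<psi> y) = \<bar>\<Sum>j<k. \<psi> (xs ! j) - \<psi> (ys ! j)\<bar>"
      using sum_mset_eq_sum_nth[OF L(1), of \<psi>] sum_mset_eq_sum_nth[OF L(2), of \<psi>] L(3,4)
      by (simp add: dist_real_def sum_subtractf)
    also have "\<dots> \<le> (\<Sum>j<k. \<bar>\<psi> (xs ! j) - \<psi> (ys ! j)\<bar>)"
      by (rule sum_abs)
    also have "\<dots> \<le> k * (e / (k + 1))"
      using sum_mono[of "{..<k}", OF close] by simp
    also have "\<dots> < e"
      using e by (simp add: field_simps)
    finally show "dist (\<Sum>y\<in>#F x'. \<psi> y) (\<Sum>y\<in>#F x. \<psi> y) < e" .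
  qed
qed

lemma prob_on_space: "prob_on X \<mu> \<Longrightarrow> space \<mu> = X"
  unfolding prob_on_def using sets_eq_imp_space_eq[of \<mu> "restrict_space borel X"]
  by (simp add: space_restrict_space)

lemma prob_on_nonempty: "prob_on X \<mu> \<Longrightarrow> X \<noteq> {}"
  using prob_space.not_empty prob_on_space unfolding prob_on_def by metis

lemma prob_on_borel_measurable:
  "prob_on X \<mu> \<Longrightarrow> f \<in> borel_measurable (restrict_space borel X) \<Longrightarrow> f \<in> borel_measurable \<mu>"
  unfolding prob_on_def using measurable_cong_sets by blast

lemma integrable_prob_on_continuous:
  fixes f :: "'a::metric_space \<Rightarrow> real"
  assumes "compact X" and mu: "prob_on X \<mu>" and f: "continuous_on X f"
  shows "integrable \<mu> f"
proof -
  interpret prob_space \<mu> using mu by (simp add: prob_on_def)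
  have "bounded (f ` X)"
    using compact_continuous_image[OF f \<open>compact X\<close>] by (rule compact_imp_bounded)
  then obtain B where "\<And>x. x \<in> X \<Longrightarrow> norm (f x) \<le> B" unfolding bounded_iff by auto
  then show ?thesis
    using prob_on_space[OF mu] prob_on_borel_measurable[OF mu borel_measurable_continuous_on_restrict[OF f]]
    by (intro integrable_const_bound[where B=B]) auto
qed

lemma borel_measurable_sum_mset_indicator_open:
  fixes A :: "'a::metric_space \<Rightarrow> real"
  assumes ics: "is_ICS X k \<theta> F" and "0 \<le> \<theta>" and "compact X"
    and cA: "continuous_on X A" and U: "open U"
  shows "(\<lambda>x. \<Sum>y\<in>#F x. exp (A y) * indicator U y) \<in> borel_measurable (restrict_space borel X)"
proof (cases "U = UNIV")
  case True
  have "continuous_on X (\<lambda>x. \<Sum>y\<in>#F x. exp (A y) * indicator U y)"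
    unfolding True by (intro continuous_on_sum_mset_ICS[OF ics assms(2,3)] continuous_intros cA) simp
  then show ?thesis by (rule borel_measurable_continuous_on_restrict)
next
  case False
  \<comment> \<open>The indicator of U is the pointwise limit of the continuous functions \<phi> n.\<close>
  define \<phi> where "\<phi> n y = min 1 (real n * infdist y (-U))" for n :: nat and y
  have lim: "(\<lambda>n. \<phi> n y) \<longlonglongrightarrow> indicator U y" for y
  proof (cases "y \<in> U")
    case True
    have pos: "infdist y (-U) > 0"
      using True False U by (intro infdist_pos_not_in_closed) auto
    obtain N :: nat where N: "1 / infdist y (-U) < N" using reals_Archimedean2 by blast
    have "\<phi> n y = 1" if "N \<le> n" for n
    proof -
      have "1 / infdist y (-U) < real n" using N that by linarith
      then show ?thesis using pos by (simp add: \<phi>_def field_simps)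
    qed
    then show ?thesis
      using True by (simp add: tendsto_eventually eventually_sequentially exI[of _ N])
  next
    case False
    then show ?thesis by (simp add: \<phi>_def)
  qed
  show ?thesis
  proof (rule borel_measurable_LIMSEQ_real)
    fix x
    show "(\<lambda>n. \<Sum>y\<in>#F x. exp (A y) * \<phi> n y) \<longlonglongrightarrow> (\<Sum>y\<in>#F x. exp (A y) * indicator U y)"
      by (intro tendsto_sum_mset tendsto_mult_left lim)
  next
    fix n
    have "continuous_on X (\<lambda>x. \<Sum>y\<in>#F x. exp (A y) * \<phi> n y)"
      unfolding \<phi>_def by (intro continuous_on_sum_mset_ICS[OF ics assms(2,3)] continuous_intros cA)
    then show "(\<lambda>x. \<Sum>y\<in>#F x. exp (A y) * \<phi> n y) \<in> borel_measurable (restrict_space borel X)"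
      by (rule borel_measurable_continuous_on_restrict)
  qed
qed

definition enum_mset :: "'a multiset \<Rightarrow> 'a list" where
  "enum_mset M = (SOME xs. mset xs = M)"

lemma mset_enum_mset [simp]: "mset (enum_mset M) = M"
  unfolding enum_mset_def by (rule someI_ex) (rule ex_mset)

definition transfer_kernel ::
    "'a::metric_space set \<Rightarrow> ('a \<Rightarrow> 'a multiset) \<Rightarrow> ('a \<Rightarrow> real) \<Rightarrow> 'a \<Rightarrow> 'a measure" where
  "transfer_kernel X F A x =
     distr (point_measure {..<size (F x)} (\<lambda>j. ennreal (exp (A (enum_mset (F x) ! j)))))
       (restrict_space borel X) (\<lambda>j. enum_mset (F x) ! j)"

lemma sets_transfer_kernel [simp]:
  "sets (transfer_kernel X F A x) = sets (restrict_space borel X)"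
  by (simp add: transfer_kernel_def)

lemma space_transfer_kernel [simp]: "space (transfer_kernel X F A x) = X"
  using sets_eq_imp_space_eq[OF sets_transfer_kernel] by (simp add: space_restrict_space)

lemma nn_integral_transfer_kernel:
  assumes ics: "is_ICS X k \<theta> F" and x: "x \<in> X"
    and f: "f \<in> borel_measurable (restrict_space borel X)"
  shows "integral\<^sup>N (transfer_kernel X F A x) f = (\<Sum>y\<in>#F x. ennreal (exp (A y)) * f y)"
proof -
  define l where "l = enum_mset (F x)"
  define P where "P = point_measure {..<length l} (\<lambda>j. ennreal (exp (A (l ! j))))"
  have "set l \<subseteq> X"
    unfolding l_def by (rule is_ICS_enumeration(2)[OF ics x mset_enum_mset])
  then have T: "(\<lambda>j. l ! j) \<in> measurable P (restrict_space borel X)"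
    unfolding P_def measurable_point_measure_eq1 space_restrict_space by auto
  have "integral\<^sup>N (transfer_kernel X F A x) f = integral\<^sup>N (distr P (restrict_space borel X) (\<lambda>j. l ! j)) f"
    unfolding transfer_kernel_def P_def l_def by (metis size_mset mset_enum_mset)
  also have "\<dots> = integral\<^sup>N P (\<lambda>j. f (l ! j))"
    using f by (intro nn_integral_distr[OF T]) simp
  also have "\<dots> = (\<Sum>j<length l. ennreal (exp (A (l ! j))) * f (l ! j))"
    unfolding P_def by (rule nn_integral_point_measure_finite) simp
  also have "\<dots> = (\<Sum>y\<in>#F x. ennreal (exp (A y)) * f y)"
    unfolding l_def by (rule sum_mset_eq_sum_nth[symmetric]) (rule mset_enum_mset)
  finally show ?thesis .
qed

lemma emeasure_transfer_kernel:
  assumes "is_ICS X k \<theta> F" "x \<in> X" "B \<in> sets (restrict_space borel X)"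
  shows "emeasure (transfer_kernel X F A x) B = (\<Sum>y\<in>#F x. ennreal (exp (A y)) * indicator B y)"
  using nn_integral_transfer_kernel[OF assms(1,2), of "indicator B" A] assms(3) by simp

lemma emeasure_transfer_kernel_open:
  assumes ics: "is_ICS X k \<theta> F" and x: "x \<in> X" and "open U"
  shows "emeasure (transfer_kernel X F A x) (X \<inter> U) = ennreal (\<Sum>y\<in>#F x. exp (A y) * indicator U y)"
proof -
  have "X \<inter> U \<in> sets (restrict_space borel X)"
    using \<open>open U\<close> by (auto simp: sets_restrict_space)
  then have "emeasure (transfer_kernel X F A x) (X \<inter> U)
      = (\<Sum>y\<in>#F x. ennreal (exp (A y)) * indicator (X \<inter> U) y)"
    by (rule emeasure_transfer_kernel[OF ics x])
  also have "\<dots> = (\<Sum>y\<in>#F x. ennreal (exp (A y) * indicator U y))"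
    using is_ICS_image(2)[OF ics x]
    by (intro arg_cong[where f=sum_mset] image_mset_cong) (auto simp: indicator_def)
  also have "\<dots> = ennreal (\<Sum>y\<in>#F x. exp (A y) * indicator U y)"
    by (rule ennreal_sum_mset) simp
  finally show ?thesis .
qed

lemma prob_space_transfer_kernel:
  assumes ics: "is_ICS X k \<theta> F" and x: "x \<in> X" and "normalized X F A"
  shows "prob_space (transfer_kernel X F A x)"
proof
  have "emeasure (transfer_kernel X F A x) (X \<inter> UNIV) = ennreal (\<Sum>y\<in>#F x. exp (A y))"
    using emeasure_transfer_kernel_open[OF ics x open_UNIV, of A] by simp
  then show "emeasure (transfer_kernel X F A x) (space (transfer_kernel X F A x)) = 1"
    using assms(3) x by (simp add: normalized_def)
qed

lemma measurable_transfer_kernel: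
  assumes ics: "is_ICS X k \<theta> F" and "0 \<le> \<theta>" and "compact X"
    and cA: "continuous_on X A" and nA: "normalized X F A"
  shows "transfer_kernel X F A \<in> restrict_space borel X \<rightarrow>\<^sub>M subprob_algebra (restrict_space borel X)"
proof (rule measurable_subprob_algebra_generated)
  have "sets (restrict_space borel X) = (\<inter>) X ` sigma_sets UNIV {U. open U}"
    by (simp add: sets_restrict_space sets_borel)
  also have "\<dots> = sigma_sets X ((\<inter>) X ` {U. open U})"
    using borel_closed[OF compact_imp_closed[OF \<open>compact X\<close>]]
    by (intro sigma_sets_Int) (auto simp: sets_borel)
  finally show "sets (restrict_space borel X) = sigma_sets X ((\<inter>) X ` {U. open U})" .
  show "Int_stable ((\<inter>) X ` {U. open U})"
  proof (unfold Int_stable_def, safe)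
    fix U V :: "'a set" assume "open U" "open V"
    then show "X \<inter> U \<inter> (X \<inter> V) \<in> (\<inter>) X ` {U. open U}"
      by (intro image_eqI[of _ _ "U \<inter> V"]) auto
  qed
  show "(\<inter>) X ` {U. open U} \<subseteq> Pow X" by auto
  fix a assume "a \<in> space (restrict_space borel X)"
  then have "a \<in> X" by (simp add: space_restrict_space)
  then show "subprob_space (transfer_kernel X F A a)"
    by (intro prob_space_imp_subprob_space prob_space_transfer_kernel[OF ics _ nA])
  show "sets (transfer_kernel X F A a) = sets (restrict_space borel X)" by simp
next
  have "(\<lambda>a. ennreal (\<Sum>y\<in>#F a. exp (A y) * indicator U y)) \<in> borel_measurable (restrict_space borel X)"
    if "open U" for U
    using borel_measurable_sum_mset_indicator_open[OF ics assms(2,3) cA that] by measurable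
  then have "(\<lambda>a. emeasure (transfer_kernel X F A a) (X \<inter> U)) \<in> borel_measurable (restrict_space borel X)"
    if "open U" for U
    using that by (subst measurable_cong[OF emeasure_transfer_kernel_open[OF ics _ that]])
      (simp_all add: space_restrict_space)
  then show "(\<lambda>a. emeasure (transfer_kernel X F A a) B) \<in> borel_measurable (restrict_space borel X)"
    if "B \<in> (\<inter>) X ` {U. open U}" for B
    using that by auto
  from this[of X] show "(\<lambda>a. emeasure (transfer_kernel X F A a) X) \<in> borel_measurable (restrict_space borel X)"
    by (metis (mono_tags) image_eqI inf_top.right_neutral mem_Collect_eq open_UNIV)
qed

lemma measurable_transfer_kernel_prob_on:
  assumes "is_ICS X k \<theta> F" and "0 \<le> \<theta>" and "compact X"
    and "continuous_on X A" and "normalized X F A" and nu: "prob_on X \<nu>"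
  shows "transfer_kernel X F A \<in> \<nu> \<rightarrow>\<^sub>M subprob_algebra (restrict_space borel X)"
proof -
  have "sets \<nu> = sets (restrict_space borel X)" using nu by (simp add: prob_on_def)
  then show ?thesis using measurable_transfer_kernel[OF assms(1-5)] measurable_cong_sets by blast
qed

lemma dual_transfer_eq_bind:
  assumes ics: "is_ICS X k \<theta> F" and "0 \<le> \<theta>" and "compact X"
    and cA: "continuous_on X A" and nA: "normalized X F A" and nu: "prob_on X \<nu>"
  shows "dual_transfer X F A \<nu> = \<nu> \<bind> transfer_kernel X F A"
proof -
  let ?S = "restrict_space borel X" and ?K = "transfer_kernel X F A"
  have sp: "space \<nu> = X" "space \<nu> \<noteq> {}"
    using prob_on_space[OF nu] prob_on_nonempty[OF nu] by auto
  have Km: "?K \<in> \<nu> \<rightarrow>\<^sub>M subprob_algebra ?S"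
    by (rule measurable_transfer_kernel_prob_on[OF assms])
  have sb: "sets (\<nu> \<bind> ?K) = sets ?S"
    using sp by (intro sets_bind) auto
  have "\<nu> \<bind> ?K = measure_of X (sets ?S) (emeasure (\<nu> \<bind> ?K))"
    using measure_of_of_measure[of "\<nu> \<bind> ?K"] sets_eq_imp_space_eq[OF sb] sb
    by (simp add: space_restrict_space)
  also have "\<dots> = measure_of X (sets ?S)
      (\<lambda>B. \<integral>\<^sup>+ x. (\<Sum>y\<in>#F x. ennreal (exp (A y)) * indicator B y) \<partial>\<nu>)"
  proof (rule measure_of_eq)
    show "sets ?S \<subseteq> Pow X" using sets.space_closed[of ?S] by (simp add: space_restrict_space)
    fix B assume "B \<in> sigma_sets X (sets ?S)"
    then have B: "B \<in> sets ?S" using sets.sigma_sets_eq[of ?S] by (simp add: space_restrict_space)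
    have "emeasure (\<nu> \<bind> ?K) B = (\<integral>\<^sup>+ x. emeasure (?K x) B \<partial>\<nu>)"
      using sp Km B by (intro emeasure_bind) auto
    also have "\<dots> = (\<integral>\<^sup>+ x. (\<Sum>y\<in>#F x. ennreal (exp (A y)) * indicator B y) \<partial>\<nu>)"
      using sp B by (intro nn_integral_cong emeasure_transfer_kernel[OF ics]) auto
    finally show "emeasure (\<nu> \<bind> ?K) B = \<dots>" .
  qed
  finally show ?thesis unfolding dual_transfer_def by simp
qed

lemma prob_on_dual_transfer:
  assumes ics: "is_ICS X k \<theta> F" and "0 \<le> \<theta>" and "compact X"
    and cA: "continuous_on X A" and nA: "normalized X F A" and nu: "prob_on X \<nu>"
  shows "prob_on X (dual_transfer X F A \<nu>)"
proof -
  have pn: "prob_space \<nu>" using nu by (simp add: prob_on_def)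
  have Km: "transfer_kernel X F A \<in> \<nu> \<rightarrow>\<^sub>M subprob_algebra (restrict_space borel X)"
    by (rule measurable_transfer_kernel_prob_on[OF assms(1-6)])
  have "prob_space (\<nu> \<bind> transfer_kernel X F A)"
    by (rule prob_space.prob_space_bind[OF pn AE_I2 Km])
      (simp add: prob_on_space[OF nu] prob_space_transfer_kernel[OF ics _ nA])
  moreover have "sets (\<nu> \<bind> transfer_kernel X F A) = sets (restrict_space borel X)"
    by (rule sets_bind[OF sets_transfer_kernel prob_space.not_empty[OF pn]])
  ultimately show ?thesis
    unfolding prob_on_def dual_transfer_eq_bind[OF assms] ..
qed

lemma nn_integral_dual_transfer:
  assumes ics: "is_ICS X k \<theta> F" and "0 \<le> \<theta>" and "compact X"
    and cA: "continuous_on X A" and nA: "normalized X F A" and nu: "prob_on X \<nu>"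
    and f: "f \<in> borel_measurable (restrict_space borel X)"
  shows "integral\<^sup>N (dual_transfer X F A \<nu>) f = (\<integral>\<^sup>+x. (\<Sum>y\<in>#F x. ennreal (exp (A y)) * f y) \<partial>\<nu>)"
proof -
  have Km: "transfer_kernel X F A \<in> \<nu> \<rightarrow>\<^sub>M subprob_algebra (restrict_space borel X)"
    by (rule measurable_transfer_kernel_prob_on[OF assms(1-6)])
  have "integral\<^sup>N (\<nu> \<bind> transfer_kernel X F A) f = (\<integral>\<^sup>+ x. integral\<^sup>N (transfer_kernel X F A x) f \<partial>\<nu>)"
    by (rule nn_integral_bind[OF f Km])
  also have "\<dots> = (\<integral>\<^sup>+x. (\<Sum>y\<in>#F x. ennreal (exp (A y)) * f y) \<partial>\<nu>)"
    using prob_on_space[OF nu] by (intro nn_integral_cong nn_integral_transfer_kernel[OF ics _ f]) auto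
  finally show ?thesis unfolding dual_transfer_eq_bind[OF assms(1-6)] .
qed

lemma nn_integral_superadd:
  "integral\<^sup>N M u + integral\<^sup>N M v \<le> (\<integral>\<^sup>+x. u x + v x \<partial>M)"
proof -
  let ?S = "\<lambda>u. {g. simple_function M g \<and> g \<le> u}"
  have ne: "?S w \<noteq> {}" for w :: "_ \<Rightarrow> ennreal"
  proof -
    have "(\<lambda>_. 0) \<in> ?S w" by (auto simp: le_fun_def)
    then show ?thesis by blast
  qed
  have "(SUP s\<in>?S u. integral\<^sup>S M s) + (SUP t\<in>?S v. integral\<^sup>S M t) \<le> (\<integral>\<^sup>+x. u x + v x \<partial>M)"
  proof (subst ennreal_SUP_add_left[symmetric, OF ne], rule SUP_least)
    fix s assume s: "s \<in> ?S u"
    show "integral\<^sup>S M s + (SUP t\<in>?S v. integral\<^sup>S M t) \<le> (\<integral>\<^sup>+x. u x + v x \<partial>M)"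
    proof (subst ennreal_SUP_add_right[OF ne], rule SUP_least)
      fix t assume t: "t \<in> ?S v"
      have "integral\<^sup>S M s + integral\<^sup>S M t = integral\<^sup>N M (\<lambda>x. s x + t x)"
        using s t by (simp add: nn_integral_eq_simple_integral)
      also have "\<dots> \<le> (\<integral>\<^sup>+x. u x + v x \<partial>M)"
        using s t by (intro nn_integral_mono) (auto simp: le_fun_def intro: add_mono)
      finally show "integral\<^sup>S M s + integral\<^sup>S M t \<le> (\<integral>\<^sup>+x. u x + v x \<partial>M)" .
    qed
  qed
  then show ?thesis unfolding nn_integral_def .
qed

lemma nn_integral_cmult_le:
  "c * integral\<^sup>N M u \<le> (\<integral>\<^sup>+x. c * u x \<partial>M)"
proof -
  let ?S = "{g. simple_function M g \<and> g \<le> u}"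
  have "c * (SUP s\<in>?S. integral\<^sup>S M s) \<le> (\<integral>\<^sup>+x. c * u x \<partial>M)"
  proof (subst SUP_mult_left_ennreal, rule SUP_least)
    fix s assume s: "s \<in> ?S"
    have "c * integral\<^sup>S M s = integral\<^sup>N M (\<lambda>x. c * s x)"
      using s by (simp add: nn_integral_eq_simple_integral)
    also have "\<dots> \<le> (\<integral>\<^sup>+x. c * u x \<partial>M)"
      using s by (intro nn_integral_mono) (auto simp: le_fun_def intro: mult_left_mono)
    finally show "c * integral\<^sup>S M s \<le> (\<integral>\<^sup>+x. c * u x \<partial>M)" .
  qed
  then show ?thesis unfolding nn_integral_def .
qed

text \<open>The map \<open>H g x = \<Sum>y\<in>#F x. w y * g y\<close> need not send measurable functions to measurable
  ones, so only super-additivity of the lower integral is available; this suffices to extend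
  the inequality from indicators to all measurable functions.\<close>
lemma nn_integral_le_nn_integral_sum_mset:
  fixes w :: "'a \<Rightarrow> ennreal"
  assumes sets: "\<And>B. B \<in> sets \<mu> \<Longrightarrow> emeasure \<mu> B \<le> (\<integral>\<^sup>+ x. (\<Sum>y\<in>#F x. w y * indicator B y) \<partial>\<mu>)"
    and F: "\<And>x. x \<in> space \<mu> \<Longrightarrow> set_mset (F x) \<subseteq> space \<mu>"
    and f: "f \<in> borel_measurable \<mu>"
  shows "integral\<^sup>N \<mu> f \<le> (\<integral>\<^sup>+x. (\<Sum>y\<in>#F x. w y * f y) \<partial>\<mu>)"
proof -
  define H where "H g x = (\<Sum>y\<in>#F x. w y * g y)" for g :: "'a \<Rightarrow> ennreal" and x
  have "integral\<^sup>N \<mu> f \<le> integral\<^sup>N \<mu> (H f)"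
    using f
  proof (induction rule: borel_measurable_induct)
    case (cong f g)
    have "H g x = H f x" if "x \<in> space \<mu>" for x
      unfolding H_def using F[OF that] cong(3) by (intro arg_cong[where f=sum_mset] image_mset_cong) auto
    then show ?case
      using cong(3,4) by (metis (no_types, lifting) nn_integral_cong)
  next
    case (set B)
    then show ?case unfolding H_def using sets by simp
  next
    case (mult u c)
    have "(\<integral>\<^sup>+x. c * u x \<partial>\<mu>) = c * integral\<^sup>N \<mu> u" using mult by (intro nn_integral_cmult)
    also have "\<dots> \<le> c * integral\<^sup>N \<mu> (H u)" using mult by (intro mult_left_mono) auto
    also have "\<dots> \<le> (\<integral>\<^sup>+x. c * H u x \<partial>\<mu>)" by (rule nn_integral_cmult_le)
    also have "\<dots> = integral\<^sup>N \<mu> (H (\<lambda>x. c * u x))"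
      unfolding H_def by (simp add: sum_mset_distrib_left mult.left_commute)
    finally show ?case .
  next
    case (add u v)
    have "(\<integral>\<^sup>+x. v x + u x \<partial>\<mu>) = integral\<^sup>N \<mu> v + integral\<^sup>N \<mu> u" using add by (intro nn_integral_add)
    also have "\<dots> \<le> integral\<^sup>N \<mu> (H v) + integral\<^sup>N \<mu> (H u)" using add by (intro add_mono)
    also have "\<dots> \<le> (\<integral>\<^sup>+x. H v x + H u x \<partial>\<mu>)" by (rule nn_integral_superadd)
    also have "\<dots> = integral\<^sup>N \<mu> (H (\<lambda>x. v x + u x))"
      unfolding H_def by (simp add: sum_mset.distrib distrib_left)
    finally show ?case .
  next
    case (seq U)
    have "(SUP i. U i) = (\<lambda>x. SUP i. U i x)" by (rule ext) (rule SUP_apply)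
    then have "integral\<^sup>N \<mu> (SUP i. U i) = (SUP i. integral\<^sup>N \<mu> (U i))"
      using seq by (simp add: nn_integral_monotone_convergence_SUP)
    also have "\<dots> \<le> integral\<^sup>N \<mu> (H (SUP i. U i))"
    proof (rule SUP_least)
      fix i
      have "integral\<^sup>N \<mu> (H (U i)) \<le> integral\<^sup>N \<mu> (H (SUP i. U i))"
        unfolding H_def
        by (intro nn_integral_mono sum_mset_mono mult_left_mono) (auto intro: SUP_upper)
      then show "integral\<^sup>N \<mu> (U i) \<le> integral\<^sup>N \<mu> (H (SUP i. U i))"
        using seq.IH by (rule order_trans[rotated])
    qed
    finally show ?case .
  qed
  then show ?thesis unfolding H_def .
qed

lemma emeasure_dual_transfer_fixed_point:
  assumes mu: "prob_on X \<mu>" and fixed: "dual_transfer X F A \<mu> = \<mu>" and B: "B \<in> sets \<mu>"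
  shows "emeasure \<mu> B = (\<integral>\<^sup>+ x. (\<Sum>y\<in>#F x. ennreal (exp (A y)) * indicator B y) \<partial>\<mu>)"
proof -
  let ?S = "restrict_space borel X"
  define \<phi> where "\<phi> B = (\<integral>\<^sup>+ x. (\<Sum>y\<in>#F x. ennreal (exp (A y)) * indicator B y) \<partial>\<mu>)" for B
  have sig: "sigma_sets X (sets ?S) = sets ?S"
    using sets.sigma_sets_eq[of ?S] by (simp add: space_restrict_space)
  have mo: "\<mu> = measure_of X (sets ?S) \<phi>"
    using fixed unfolding dual_transfer_def \<phi>_def by simp
  \<comment> \<open>Otherwise \<open>measure_of\<close> yields the null measure, but \<open>\<mu>\<close> has total mass 1.\<close>
  have "measure_space X (sigma_sets X (sets ?S)) \<phi>"
  proof (rule ccontr)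
    assume "\<not> ?thesis"
    then have "emeasure \<mu> X = 0"
      by (subst mo) (simp add: emeasure_measure_of_conv)
    then show False
      using mu prob_space.emeasure_space_1 prob_on_space unfolding prob_on_def by fastforce
  qed
  then have "emeasure \<mu> B = \<phi> B"
    using B mu sig unfolding prob_on_def by (subst mo) (simp add: emeasure_measure_of_conv)
  then show ?thesis unfolding \<phi>_def .
qed

lemma nn_integral_le_dual_transfer_fixed_point:
  assumes ics: "is_ICS X k \<theta> F" and mu: "prob_on X \<mu>" and fixed: "dual_transfer X F A \<mu> = \<mu>"
    and f: "f \<in> borel_measurable (restrict_space borel X)"
  shows "integral\<^sup>N \<mu> f \<le> (\<integral>\<^sup>+x. (\<Sum>y\<in>#F x. ennreal (exp (A y)) * f y) \<partial>\<mu>)"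
  using emeasure_dual_transfer_fixed_point[OF mu fixed] is_ICS_image(2)[OF ics]
    prob_on_space[OF mu] prob_on_borel_measurable[OF mu f]
  by (intro nn_integral_le_nn_integral_sum_mset) auto

lemma sum_weighted_le_transport:
  fixes a b f h :: "nat \<Rightarrow> real"
  assumes sa: "(\<Sum>j<k. a j) = 1" and sb: "(\<Sum>j<k. b j) = 1" and b0: "\<And>j. j < k \<Longrightarrow> 0 \<le> b j"
    and ab: "\<And>j. j < k \<Longrightarrow> \<bar>a j - b j\<bar> \<le> a j * p + b j * q"
    and fb: "\<And>j. j < k \<Longrightarrow> 0 \<le> f j \<and> f j \<le> Dm"
    and fh: "\<And>j. j < k \<Longrightarrow> f j - h j \<le> D"
  shows "(\<Sum>j<k. a j * f j) \<le> (\<Sum>j<k. b j * h j) + Dm * (p + q) / 2 + D"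
proof -
  have Dm: "0 \<le> Dm"
    using sa fb[of 0] by (cases k) auto
  have "(\<Sum>j<k. a j * f j) = (\<Sum>j<k. (a j - b j) * f j) + (\<Sum>j<k. b j * (f j - h j)) + (\<Sum>j<k. b j * h j)"
    by (simp add: sum.distrib[symmetric] algebra_simps)
  moreover have "(\<Sum>j<k. b j * (f j - h j)) \<le> D"
  proof -
    have "(\<Sum>j<k. b j * (f j - h j)) \<le> (\<Sum>j<k. b j * D)"
      using b0 fh by (intro sum_mono mult_left_mono) auto
    then show ?thesis using sb by (simp add: sum_distrib_right[symmetric])
  qed
  \<comment> \<open>The \<open>a j - b j\<close> sum to zero, so only their positive parts, of total mass half their
    \<open>\<ell>\<^sup>1\<close>-norm, contribute against \<open>0 \<le> f \<le> Dm\<close>.\<close>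
  moreover have "(\<Sum>j<k. (a j - b j) * f j) \<le> Dm / 2 * (\<Sum>j<k. \<bar>a j - b j\<bar>)"
  proof -
    have "(\<Sum>j<k. (a j - b j) * f j) \<le> (\<Sum>j<k. Dm / 2 * ((a j - b j) + \<bar>a j - b j\<bar>))"
    proof (rule sum_mono)
      fix j assume "j \<in> {..<k}"
      then have "0 \<le> f j" "f j \<le> Dm" using fb by auto
      show "(a j - b j) * f j \<le> Dm / 2 * ((a j - b j) + \<bar>a j - b j\<bar>)"
      proof (cases "0 \<le> a j - b j")
        case True
        have "(a j - b j) * f j \<le> (a j - b j) * Dm"
          using \<open>f j \<le> Dm\<close> True by (rule mult_left_mono)
        then show ?thesis using True by (simp add: algebra_simps)
      next
        case False
        then show ?thesis using \<open>0 \<le> f j\<close> by (simp add: mult_nonpos_nonneg)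
      qed
    qed
    also have "\<dots> = Dm / 2 * ((\<Sum>j<k. a j) - (\<Sum>j<k. b j) + (\<Sum>j<k. \<bar>a j - b j\<bar>))"
      by (simp only: sum_distrib_left[symmetric] sum.distrib sum_subtractf)
    finally show ?thesis using sa sb by simp
  qed
  moreover have "Dm / 2 * (\<Sum>j<k. \<bar>a j - b j\<bar>) \<le> Dm / 2 * (p + q)"
  proof -
    have "(\<Sum>j<k. \<bar>a j - b j\<bar>) \<le> (\<Sum>j<k. a j * p + b j * q)"
      using ab by (intro sum_mono) auto
    also have "\<dots> = p + q"
      using sa sb by (simp add: sum.distrib sum_distrib_right[symmetric])
    finally show ?thesis using Dm by (intro mult_left_mono) auto
  qed
  ultimately show ?thesis by simp
qed

lemma abs_exp_diff_le:
  fixes u v M :: real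
  assumes "\<bar>u - v\<bar> \<le> M"
  shows "\<bar>exp u - exp v\<bar> \<le> exp u * (exp M - 1)"
proof -
  have "\<bar>1 - exp t\<bar> \<le> exp \<bar>t\<bar> - 1" for t :: real
  proof (cases "0 \<le> t")
    case False
    have "1 + t \<le> exp t" "1 + (- t) \<le> exp (- t)" by (rule exp_ge_add_one_self)+
    then have "1 - exp t \<le> exp (- t) - 1" by linarith
    moreover have "exp t \<le> 1" using False by simp
    ultimately show ?thesis using False by simp
  qed simp
  have "exp u - exp v = exp u * (1 - exp (v - u))"
    by (simp add: exp_diff field_simps)
  then have "\<bar>exp u - exp v\<bar> = exp u * \<bar>1 - exp (v - u)\<bar>"
    by (simp add: abs_mult)
  also have "\<dots> \<le> exp u * (exp \<bar>v - u\<bar> - 1)"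
    using \<open>\<And>t. \<bar>1 - exp t\<bar> \<le> exp \<bar>t\<bar> - 1\<close> by (intro mult_left_mono) auto
  also have "\<dots> \<le> exp u * (exp M - 1)"
    using assms by (simp add: abs_minus_commute)
  finally show ?thesis .
qed

lemma exp_minus_one_half_le:
  fixes t :: real
  assumes "0 \<le> t" "t \<le> 1"
  shows "(exp t - 1) / 2 \<le> t"
proof -
  have "t\<^sup>2 \<le> t" using assms by (simp add: power2_eq_square mult_left_le_one_le)
  then show ?thesis using exp_bound[OF assms] by simp
qed

lemma Lip_nonneg:
  fixes A :: "'a::metric_space \<Rightarrow> real"
  assumes "\<exists>L. L-lipschitz_on X A"
  shows "0 \<le> Lip X A"
  unfolding Lip_def using assms by (intro cInf_greatest) (auto dest: lipschitz_on_nonneg)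

lemma abs_diff_le_Lip:
  fixes A :: "'a::metric_space \<Rightarrow> real"
  assumes "\<exists>L. L-lipschitz_on X A" and a: "a \<in> X" and b: "b \<in> X"
  shows "\<bar>A a - A b\<bar> \<le> Lip X A * dist a b"
proof (cases "a = b")
  case False
  then have d: "0 < dist a b" by simp
  have "\<bar>A a - A b\<bar> / dist a b \<le> Lip X A"
    unfolding Lip_def
  proof (rule cInf_greatest)
    show "{L. L-lipschitz_on X A} \<noteq> {}" using assms(1) by auto
    fix L assume "L \<in> {L. L-lipschitz_on X A}"
    then have "dist (A a) (A b) \<le> L * dist a b" using a b by (auto dest: lipschitz_onD)
    then show "\<bar>A a - A b\<bar> / dist a b \<le> L" using d by (simp add: dist_real_def field_simps)
  qed
  then show ?thesis using d by (simp add: field_simps)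
qed simp

lemma lipschitz_on_1_diff_le:
  fixes f :: "'a::metric_space \<Rightarrow> real"
  shows "1-lipschitz_on X f \<Longrightarrow> a \<in> X \<Longrightarrow> b \<in> X \<Longrightarrow> f a - f b \<le> dist a b"
  using lipschitz_onD[of 1 X f a b] by (simp add: dist_real_def)

lemma lipschitz_on_1_shift_range:
  fixes f :: "'a::metric_space \<Rightarrow> real"
  assumes "compact X" and "X \<noteq> {}" and f: "1-lipschitz_on X f"
  obtains m where "\<And>y. y \<in> X \<Longrightarrow> 0 \<le> f y - m \<and> f y - m \<le> diameter X"
proof -
  have "bounded (f ` X)"
    using compact_continuous_image[OF lipschitz_on_continuous_on[OF f] \<open>compact X\<close>]
    by (rule compact_imp_bounded)
  then have bb: "bdd_below (f ` X)" by (rule bounded_imp_bdd_below)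
  have "0 \<le> f y - Inf (f ` X) \<and> f y - Inf (f ` X) \<le> diameter X" if y: "y \<in> X" for y
  proof
    show "0 \<le> f y - Inf (f ` X)" using cInf_lower[OF _ bb, of "f y"] y by simp
    have "f y - diameter X \<le> Inf (f ` X)"
    proof (rule cInf_greatest)
      show "f ` X \<noteq> {}" using \<open>X \<noteq> {}\<close> by simp
      fix z assume "z \<in> f ` X"
      then obtain w where w: "w \<in> X" "z = f w" by auto
      have "f y - f w \<le> dist y w" by (rule lipschitz_on_1_diff_le[OF f y w(1)])
      also have "\<dots> \<le> diameter X"
        by (rule diameter_bounded_bound[OF compact_imp_bounded[OF \<open>compact X\<close>] y w(1)])
      finally show "f y - diameter X \<le> z" using w by simp
    qed
    then show "f y - Inf (f ` X) \<le> diameter X" by simp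
  qed
  then show ?thesis using that by blast
qed

lemma integral_diff_const_prob_space:
  fixes f :: "'a \<Rightarrow> real"
  assumes "prob_space \<mu>" and "integrable \<mu> f"
  shows "(\<integral>x. f x - m \<partial>\<mu>) = (\<integral>x. f x \<partial>\<mu>) - m"
  using assms by (simp add: prob_space.prob_space prob_space.finite_measure finite_measure.integrable_const)

lemma integral_diff_le_diameter:
  fixes f :: "'a::metric_space \<Rightarrow> real"
  assumes "compact X" and mu: "prob_on X \<mu>" and nu: "prob_on X \<nu>" and f: "1-lipschitz_on X f"
  shows "(\<integral>x. f x \<partial>\<mu>) - (\<integral>x. f x \<partial>\<nu>) \<le> diameter X"
proof -
  obtain m where m: "\<And>y. y \<in> X \<Longrightarrow> 0 \<le> f y - m \<and> f y - m \<le> diameter X"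
    using lipschitz_on_1_shift_range[OF \<open>compact X\<close> prob_on_nonempty[OF mu] f] by blast
  have c: "continuous_on X f" "continuous_on X (\<lambda>x. f x - m)"
    using lipschitz_on_continuous_on[OF f] by (auto intro!: continuous_on_diff)
  have pm: "prob_space \<mu>" "prob_space \<nu>" using mu nu by (auto simp: prob_on_def)
  have "(\<integral>x. f x - m \<partial>\<mu>) \<le> diameter X"
    using m prob_on_space[OF mu]
    by (intro prob_space.integral_le_const[OF pm(1) integrable_prob_on_continuous[OF \<open>compact X\<close> mu c(2)]] AE_I2) auto
  moreover have "0 \<le> (\<integral>x. f x - m \<partial>\<nu>)"
    using m prob_on_space[OF nu]
    by (intro prob_space.integral_ge_const[OF pm(2) integrable_prob_on_continuous[OF \<open>compact X\<close> nu c(2)]] AE_I2) auto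
  ultimately show ?thesis
    using integral_diff_const_prob_space[OF pm(1) integrable_prob_on_continuous[OF \<open>compact X\<close> mu c(1)]]
      integral_diff_const_prob_space[OF pm(2) integrable_prob_on_continuous[OF \<open>compact X\<close> nu c(1)]]
    by simp
qed

lemma bdd_above_integral_diff_lipschitz:
  fixes X :: "'a::metric_space set"
  assumes "compact X" and "prob_on X \<mu>" and "prob_on X \<nu>"
  shows "bdd_above ((\<lambda>f :: 'a \<Rightarrow> real. (\<integral>x. f x \<partial>\<mu>) - (\<integral>x. f x \<partial>\<nu>)) ` {f. 1-lipschitz_on X f})"
  using integral_diff_le_diameter[OF assms] by (intro bdd_aboveI2[where M="diameter X"]) auto

lemma W1_ge:
  assumes "compact X" and "prob_on X \<mu>" and "prob_on X \<nu>" and "1-lipschitz_on X f"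
  shows "(\<integral>x. f x \<partial>\<mu>) - (\<integral>x. f x \<partial>\<nu>) \<le> W1 X \<mu> \<nu>"
  unfolding W1_def using assms
  by (intro cSUP_upper[OF _ bdd_above_integral_diff_lipschitz[OF assms(1-3)]]) simp

lemma W1_le:
  assumes "\<And>f. 1-lipschitz_on X f \<Longrightarrow> (\<integral>x. f x \<partial>\<mu>) - (\<integral>x. f x \<partial>\<nu>) \<le> B"
  shows "W1 X \<mu> \<nu> \<le> B"
proof -
  have "(\<lambda>_. 0::real) \<in> {f. 1-lipschitz_on X f}"
    using lipschitz_on_le[OF lipschitz_on_constant[of X "0::real"], of 1] by simp
  then show ?thesis unfolding W1_def using assms by (intro cSUP_least) auto
qed

lemma W1_nonneg:
  assumes "compact X" and "prob_on X \<mu>" and "prob_on X \<nu>"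
  shows "0 \<le> W1 X \<mu> \<nu>"
  using W1_ge[OF assms, of "\<lambda>_. 0"] lipschitz_on_le[OF lipschitz_on_constant[of X "0::real"], of 1]
  by simp

lemma W1_self:
  assumes "compact X" and "prob_on X \<mu>"
  shows "W1 X \<mu> \<mu> = 0"
  using W1_le[of X \<mu> \<mu> 0] W1_nonneg[OF assms assms(2)] by simp

lemma W1_triangle:
  assumes "compact X" and mu: "prob_on X \<mu>" and nu: "prob_on X \<nu>" and rho: "prob_on X \<rho>"
  shows "W1 X \<mu> \<rho> \<le> W1 X \<mu> \<nu> + W1 X \<nu> \<rho>"
proof (rule W1_le)
  fix f :: "'a \<Rightarrow> real" assume "1-lipschitz_on X f"
  then show "(\<integral>x. f x \<partial>\<mu>) - (\<integral>x. f x \<partial>\<rho>) \<le> W1 X \<mu> \<nu> + W1 X \<nu> \<rho>"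
    using W1_ge[OF \<open>compact X\<close> mu nu] W1_ge[OF \<open>compact X\<close> nu rho] by fastforce
qed

definition matching_cost :: "('a::metric_space \<Rightarrow> 'a multiset) \<Rightarrow> ('a \<Rightarrow> 'a multiset) \<Rightarrow> 'a \<Rightarrow> real" where
  "matching_cost F1 F2 x = Inf {(MAX j\<in>{..<length xs}. dist (xs ! j) (ys ! j)) | xs ys.
      mset xs = F1 x \<and> mset ys = F2 x}"

lemma d_infty_eq_SUP_matching_cost: "d_infty X F1 F2 = (SUP x\<in>X. matching_cost F1 F2 x)"
  by (simp add: d_infty_def matching_cost_def)

lemma max_dist_enumerations_bounds:
  assumes ics1: "is_ICS X k \<theta>1 F1" and ics2: "is_ICS X k \<theta>2 F2" and "compact X" and "0 < k"
    and x: "x \<in> X" and xs: "mset xs = F1 x" and ys: "mset ys = F2 x"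
  shows "\<And>j. j < k \<Longrightarrow> dist (xs ! j) (ys ! j) \<le> (MAX j\<in>{..<length xs}. dist (xs ! j) (ys ! j))"
    and "(MAX j\<in>{..<length xs}. dist (xs ! j) (ys ! j)) \<le> diameter X"
proof -
  have l: "length xs = k" "length ys = k" "set xs \<subseteq> X" "set ys \<subseteq> X"
    using is_ICS_enumeration[OF ics1 x xs] is_ICS_enumeration[OF ics2 x ys] by auto
  show "\<And>j. j < k \<Longrightarrow> dist (xs ! j) (ys ! j) \<le> (MAX j\<in>{..<length xs}. dist (xs ! j) (ys ! j))"
    using l by (auto intro!: Max_ge)
  show "(MAX j\<in>{..<length xs}. dist (xs ! j) (ys ! j)) \<le> diameter X"
    using l \<open>0 < k\<close> compact_imp_bounded[OF \<open>compact X\<close>]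
    by (auto intro!: Max.boundedI diameter_bounded_bound nth_mem)
qed

lemma matching_cost_bounds:
  assumes ics1: "is_ICS X k \<theta>1 F1" and ics2: "is_ICS X k \<theta>2 F2" and "compact X" and "0 < k"
    and x: "x \<in> X"
  shows "0 \<le> matching_cost F1 F2 x" and "matching_cost F1 F2 x \<le> diameter X"
proof -
  let ?I = "{(MAX j\<in>{..<length xs}. dist (xs ! j) (ys ! j)) | xs ys. mset xs = F1 x \<and> mset ys = F2 x}"
  have ne: "?I \<noteq> {}"
    using mset_enum_mset by blast
  have bounds: "0 \<le> y \<and> y \<le> diameter X" if "y \<in> ?I" for y
  proof -
    obtain xs ys where xs: "mset xs = F1 x" and ys: "mset ys = F2 x"
      and y: "y = (MAX j\<in>{..<length xs}. dist (xs ! j) (ys ! j))"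
      using \<open>y \<in> ?I\<close> by blast
    show ?thesis
      using order_trans[OF zero_le_dist max_dist_enumerations_bounds(1)[OF assms xs ys \<open>0 < k\<close>]]
        max_dist_enumerations_bounds(2)[OF assms xs ys]
      unfolding y by blast
  qed
  show "0 \<le> matching_cost F1 F2 x"
    unfolding matching_cost_def using ne bounds by (intro cInf_greatest) auto
  obtain y where "y \<in> ?I" using ne by blast
  then have "Inf ?I \<le> y"
    using bounds by (intro cInf_lower bdd_belowI[of _ 0]) auto
  then show "matching_cost F1 F2 x \<le> diameter X"
    unfolding matching_cost_def using bounds[OF \<open>y \<in> ?I\<close>] by linarith
qed

lemma matching_cost_le_d_infty:
  assumes "is_ICS X k \<theta>1 F1" and "is_ICS X k \<theta>2 F2" and "compact X" and "0 < k" and "x \<in> X"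
  shows "matching_cost F1 F2 x \<le> d_infty X F1 F2"
  unfolding d_infty_eq_SUP_matching_cost using assms matching_cost_bounds(2)[OF assms(1-4)]
  by (intro cSUP_upper bdd_aboveI2) auto

lemma d_infty_nonneg:
  assumes "is_ICS X k \<theta>1 F1" and "is_ICS X k \<theta>2 F2" and "compact X" and "0 < k" and "X \<noteq> {}"
  shows "0 \<le> d_infty X F1 F2"
proof -
  obtain x where "x \<in> X" using \<open>X \<noteq> {}\<close> by blast
  then show ?thesis
    using matching_cost_bounds(1)[OF assms(1-4)] matching_cost_le_d_infty[OF assms(1-4)]
    by (meson order_trans)
qed

lemma d_infty_enumerations:
  assumes ics1: "is_ICS X k \<theta>1 F1" and ics2: "is_ICS X k \<theta>2 F2" and "compact X" and "0 < k"
    and x: "x \<in> X" and "0 < e"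
  obtains xs ys where "mset xs = F1 x" "mset ys = F2 x" "length xs = k" "length ys = k"
    "set xs \<subseteq> X" "set ys \<subseteq> X" "\<And>j. j < k \<Longrightarrow> dist (xs ! j) (ys ! j) \<le> d_infty X F1 F2 + e"
proof -
  let ?I = "{(MAX j\<in>{..<length xs}. dist (xs ! j) (ys ! j)) | xs ys. mset xs = F1 x \<and> mset ys = F2 x}"
  have "?I \<noteq> {}"
    using mset_enum_mset by blast
  moreover have "Inf ?I < d_infty X F1 F2 + e"
    using matching_cost_le_d_infty[OF assms(1-5)] \<open>0 < e\<close> unfolding matching_cost_def by linarith
  ultimately have "\<exists>y\<in>?I. y < d_infty X F1 F2 + e"
    by (rule cInf_lessD)
  then obtain y where "y \<in> ?I" and lt: "y < d_infty X F1 F2 + e"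
    by blast
  then obtain xs ys where xs: "mset xs = F1 x" and ys: "mset ys = F2 x"
    and y: "y = (MAX j\<in>{..<length xs}. dist (xs ! j) (ys ! j))"
    by blast
  show ?thesis
  proof (rule that[OF xs ys])
    show "length xs = k" "set xs \<subseteq> X" by (rule is_ICS_enumeration[OF ics1 x xs])+
    show "length ys = k" "set ys \<subseteq> X" by (rule is_ICS_enumeration[OF ics2 x ys])+
    show "dist (xs ! j) (ys ! j) \<le> d_infty X F1 F2 + e" if "j < k" for j
      using max_dist_enumerations_bounds(1)[OF assms(1-5) xs ys that] lt unfolding y by linarith
  qed
qed

lemma sum_mset_transfer_perturbation:
  fixes A1 A2 f :: "'a::metric_space \<Rightarrow> real"
  assumes x: "x \<in> X" and nA1: "normalized X F1 A1" and nA2: "normalized X F2 A2"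
    and xs: "mset xs = F1 x" "length xs = k" "set xs \<subseteq> X"
    and ys: "mset ys = F2 x" "length ys = k" "set ys \<subseteq> X"
    and close: "\<And>j. j < k \<Longrightarrow> dist (xs ! j) (ys ! j) \<le> D"
    and N: "\<And>y. y \<in> X \<Longrightarrow> \<bar>A1 y - A2 y\<bar> \<le> N"
    and L: "\<And>a b. a \<in> X \<Longrightarrow> b \<in> X \<Longrightarrow> \<bar>A2 a - A2 b\<bar> \<le> L * dist a b" "0 \<le> L"
    and f: "\<And>y. y \<in> X \<Longrightarrow> 0 \<le> f y \<and> f y \<le> Dm"
    and f_lip: "\<And>a b. a \<in> X \<Longrightarrow> b \<in> X \<Longrightarrow> f a - f b \<le> dist a b"
  shows "(\<Sum>y\<in>#F1 x. exp (A1 y) * f y)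
     \<le> (\<Sum>y\<in>#F2 x. exp (A2 y) * f y) + Dm * ((exp N - 1) + (exp (L * D) - 1)) / 2 + D"
proof -
  have mem: "xs ! j \<in> X" "ys ! j \<in> X" if "j < k" for j
    using xs ys that by (auto intro: nth_mem)
  have sums: "(\<Sum>j<k. exp (A1 (xs ! j))) = 1" "(\<Sum>j<k. exp (A2 (ys ! j))) = 1"
    using sum_mset_eq_sum_nth[OF xs(1), of "\<lambda>y. exp (A1 y)"] sum_mset_eq_sum_nth[OF ys(1), of "\<lambda>y. exp (A2 y)"]
      xs(2) ys(2) nA1 nA2 x by (simp_all add: normalized_def)
  \<comment> \<open>Compare both weights with the intermediate weight \<open>exp (A2 (xs ! j))\<close>.\<close>
  have weights: "\<bar>exp (A1 (xs ! j)) - exp (A2 (ys ! j))\<bar>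
      \<le> exp (A1 (xs ! j)) * (exp N - 1) + exp (A2 (ys ! j)) * (exp (L * D) - 1)" if j: "j < k" for j
  proof -
    have "\<bar>exp (A1 (xs ! j)) - exp (A2 (xs ! j))\<bar> \<le> exp (A1 (xs ! j)) * (exp N - 1)"
      using N mem[OF j] by (intro abs_exp_diff_le) auto
    moreover have "\<bar>A2 (ys ! j) - A2 (xs ! j)\<bar> \<le> L * D"
      using L(1)[OF mem(2,1)[OF j]] close[OF j] L(2)
      by (metis dist_commute mult_left_mono order_trans)
    then have "\<bar>exp (A2 (ys ! j)) - exp (A2 (xs ! j))\<bar> \<le> exp (A2 (ys ! j)) * (exp (L * D) - 1)"
      by (rule abs_exp_diff_le)
    ultimately show ?thesis by linarith
  qed
  have "(\<Sum>j<k. exp (A1 (xs ! j)) * f (xs ! j))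
      \<le> (\<Sum>j<k. exp (A2 (ys ! j)) * f (ys ! j)) + Dm * ((exp N - 1) + (exp (L * D) - 1)) / 2 + D"
  proof (rule sum_weighted_le_transport[OF sums _ weights])
    fix j assume j: "j < k"
    show "0 \<le> exp (A2 (ys ! j))" by simp
    show "0 \<le> f (xs ! j) \<and> f (xs ! j) \<le> Dm" using f mem[OF j] by blast
    show "f (xs ! j) - f (ys ! j) \<le> D" using f_lip[OF mem[OF j]] close[OF j] by linarith
  qed
  then show ?thesis
    using sum_mset_eq_sum_nth[OF xs(1), of "\<lambda>y. exp (A1 y) * f y"]
      sum_mset_eq_sum_nth[OF ys(1), of "\<lambda>y. exp (A2 y) * f y"] xs(2) ys(2)
    by simp
qed

lemma integral_dual_transfer:
  fixes f :: "'a::metric_space \<Rightarrow> real"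
  assumes ics: "is_ICS X k \<theta> F" and "0 \<le> \<theta>" and "compact X"
    and cA: "continuous_on X A" and nA: "normalized X F A" and nu: "prob_on X \<nu>"
    and cf: "continuous_on X f" and f0: "\<And>y. y \<in> X \<Longrightarrow> 0 \<le> f y"
  shows "(\<integral>x. f x \<partial>dual_transfer X F A \<nu>) = (\<integral>x. (\<Sum>y\<in>#F x. exp (A y) * f y) \<partial>\<nu>)"
proof -
  let ?g = "\<lambda>x. \<Sum>y\<in>#F x. exp (A y) * f y"
  have Tnu: "prob_on X (dual_transfer X F A \<nu>)"
    by (rule prob_on_dual_transfer[OF assms(1-6)])
  have cg: "continuous_on X ?g"
    by (intro continuous_on_sum_mset_ICS[OF ics assms(2,3)] continuous_intros cA cf)
  have g0: "0 \<le> ?g x" if "x \<in> X" for x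
    using is_ICS_image(2)[OF ics that] f0 by (intro sum_mset_nonneg) auto
  have "ennreal (\<integral>x. f x \<partial>dual_transfer X F A \<nu>) = (\<integral>\<^sup>+x. ennreal (f x) \<partial>dual_transfer X F A \<nu>)"
    using f0 prob_on_space[OF Tnu]
    by (intro nn_integral_eq_integral[symmetric] integrable_prob_on_continuous[OF assms(3) Tnu cf] AE_I2) auto
  also have "\<dots> = (\<integral>\<^sup>+x. (\<Sum>y\<in>#F x. ennreal (exp (A y)) * ennreal (f y)) \<partial>\<nu>)"
    using borel_measurable_continuous_on_restrict[OF cf]
    by (intro nn_integral_dual_transfer[OF assms(1-6)]) measurable
  also have "\<dots> = (\<integral>\<^sup>+x. ennreal (?g x) \<partial>\<nu>)"
    using is_ICS_image(2)[OF ics] f0 prob_on_space[OF nu]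
    by (intro nn_integral_cong ennreal_sum_mset_mult) auto
  also have "\<dots> = ennreal (\<integral>x. ?g x \<partial>\<nu>)"
    using g0 prob_on_space[OF nu]
    by (intro nn_integral_eq_integral integrable_prob_on_continuous[OF assms(3) nu cg] AE_I2) auto
  finally show ?thesis
    using f0 g0 prob_on_space[OF nu] prob_on_space[OF Tnu]
    by (subst (asm) ennreal_inj) (auto intro!: integral_nonneg_AE AE_I2)
qed

lemma integral_fixed_point_le_integral_dual_transfer:
  fixes f :: "'a::metric_space \<Rightarrow> real"
  assumes ics1: "is_ICS X k \<theta>1 F1" and ics2: "is_ICS X k \<theta> F2" and "0 \<le> \<theta>" and "compact X"
    and cA2: "continuous_on X A2" and nA2: "normalized X F2 A2"
    and mu: "prob_on X \<mu>" and fixed: "dual_transfer X F1 A1 \<mu> = \<mu>"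
    and cf: "continuous_on X f" and f0: "\<And>y. y \<in> X \<Longrightarrow> 0 \<le> f y"
    and pw: "\<And>x. x \<in> X \<Longrightarrow> (\<Sum>y\<in>#F1 x. exp (A1 y) * f y) \<le> (\<Sum>y\<in>#F2 x. exp (A2 y) * f y) + B"
  shows "(\<integral>x. f x \<partial>\<mu>) \<le> (\<integral>x. f x \<partial>dual_transfer X F2 A2 \<mu>) + B"
proof -
  define g where "g x = (\<Sum>y\<in>#F2 x. exp (A2 y) * f y)" for x
  have pm: "prob_space \<mu>" using mu by (simp add: prob_on_def)
  have ig: "integrable \<mu> g"
    unfolding g_def
    by (intro integrable_prob_on_continuous[OF assms(4) mu] continuous_on_sum_mset_ICS[OF ics2 assms(3,4)]
        continuous_intros cA2 cf)
  have F1_sum: "(\<Sum>y\<in>#F1 x. ennreal (exp (A1 y)) * ennreal (f y)) = ennreal (\<Sum>y\<in>#F1 x. exp (A1 y) * f y)"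
    and F1_nonneg: "0 \<le> (\<Sum>y\<in>#F1 x. exp (A1 y) * f y)" if "x \<in> X" for x
    using is_ICS_image(2)[OF ics1 that] f0
    by (auto intro!: ennreal_sum_mset_mult sum_mset_nonneg)
  have gB0: "0 \<le> g x + B" if "x \<in> X" for x
    using pw[OF that] F1_nonneg[OF that] unfolding g_def by linarith
  have "ennreal (\<integral>x. f x \<partial>\<mu>) = (\<integral>\<^sup>+x. ennreal (f x) \<partial>\<mu>)"
    using f0 prob_on_space[OF mu]
    by (intro nn_integral_eq_integral[symmetric] integrable_prob_on_continuous[OF assms(4) mu cf] AE_I2) auto
  also have "\<dots> \<le> (\<integral>\<^sup>+x. (\<Sum>y\<in>#F1 x. ennreal (exp (A1 y)) * ennreal (f y)) \<partial>\<mu>)"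
    using borel_measurable_continuous_on_restrict[OF cf]
    by (intro nn_integral_le_dual_transfer_fixed_point[OF ics1 mu fixed]) measurable
  also have "\<dots> \<le> (\<integral>\<^sup>+x. ennreal (g x + B) \<partial>\<mu>)"
    using pw prob_on_space[OF mu] unfolding g_def
    by (intro nn_integral_mono) (simp add: F1_sum ennreal_leI)
  also have "\<dots> = ennreal (\<integral>x. g x + B \<partial>\<mu>)"
    using gB0 prob_on_space[OF mu]
    by (intro nn_integral_eq_integral AE_I2 Bochner_Integration.integrable_add ig
        finite_measure.integrable_const prob_space.finite_measure pm) auto
  finally have "ennreal (\<integral>x. f x \<partial>\<mu>) \<le> ennreal (\<integral>x. g x + B \<partial>\<mu>)" .
  moreover have "0 \<le> (\<integral>x. g x + B \<partial>\<mu>)"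
    using gB0 prob_on_space[OF mu] by (intro integral_nonneg_AE AE_I2) auto
  moreover have "(\<integral>x. g x + B \<partial>\<mu>) = (\<integral>x. f x \<partial>dual_transfer X F2 A2 \<mu>) + B"
    using integral_diff_const_prob_space[OF pm ig, of "-B"]
      integral_dual_transfer[OF ics2 assms(3,4) cA2 nA2 mu cf f0]
    unfolding g_def by simp
  ultimately show ?thesis by (simp add: ennreal_le_iff)
qed

lemma sum_mset_transfer_perturbation_linear:
  fixes A1 A2 f :: "'a::metric_space \<Rightarrow> real"
  assumes ics1: "is_ICS X k \<theta>1 F1" and ics2: "is_ICS X k \<theta>2 F2" and "compact X" and "0 < k"
    and nA1: "normalized X F1 A1" and nA2: "normalized X F2 A2" and lipA2: "\<exists>L. L-lipschitz_on X A2"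
    and x: "x \<in> X" and hN: "\<forall>x\<in>X. \<bar>A1 x - A2 x\<bar> \<le> N" and "N \<le> 1"
    and \<delta>: "d_infty X F1 F2 < \<delta>" "Lip X A2 * \<delta> \<le> 1"
    and f: "1-lipschitz_on X f" and f_range: "\<And>y. y \<in> X \<Longrightarrow> 0 \<le> f y \<and> f y \<le> diameter X"
  shows "(\<Sum>y\<in>#F1 x. exp (A1 y) * f y)
    \<le> (\<Sum>y\<in>#F2 x. exp (A2 y) * f y) + (diameter X * (N + Lip X A2 * \<delta>) + \<delta>)"
proof -
  let ?L = "Lip X A2" and ?D = "diameter X"
  have L0: "0 \<le> ?L" by (rule Lip_nonneg[OF lipA2])
  have D0: "0 \<le> ?D" using \<open>compact X\<close> by (intro diameter_ge_0 compact_imp_bounded)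
  have "0 \<le> d_infty X F1 F2" using x by (intro d_infty_nonneg[OF ics1 ics2 \<open>compact X\<close> \<open>0 < k\<close>]) auto
  then have LD0: "0 \<le> ?L * \<delta>" using L0 \<delta>(1) by simp
  have N0: "0 \<le> N" using hN x abs_ge_zero order_trans by blast
  obtain xs ys where xs: "mset xs = F1 x" "length xs = k" "set xs \<subseteq> X"
    and ys: "mset ys = F2 x" "length ys = k" "set ys \<subseteq> X"
    and close: "\<And>j. j < k \<Longrightarrow> dist (xs ! j) (ys ! j) \<le> d_infty X F1 F2 + (\<delta> - d_infty X F1 F2)"
    using d_infty_enumerations[OF ics1 ics2 \<open>compact X\<close> \<open>0 < k\<close> x] \<delta>(1) by (metis diff_gt_0_iff_gt)
  have "(\<Sum>y\<in>#F1 x. exp (A1 y) * f y)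
      \<le> (\<Sum>y\<in>#F2 x. exp (A2 y) * f y) + ?D * ((exp N - 1) + (exp (?L * \<delta>) - 1)) / 2 + \<delta>"
    using hN abs_diff_le_Lip[OF lipA2] L0 f_range lipschitz_on_1_diff_le[OF f] close
    by (intro sum_mset_transfer_perturbation[OF x nA1 nA2 xs ys]) auto
  also have "?D * ((exp N - 1) + (exp (?L * \<delta>) - 1)) / 2 \<le> ?D * (N + ?L * \<delta>)"
  proof -
    have "(exp N - 1) / 2 \<le> N"
      using N0 \<open>N \<le> 1\<close> by (rule exp_minus_one_half_le)
    moreover have "(exp (?L * \<delta>) - 1) / 2 \<le> ?L * \<delta>"
      using LD0 \<delta>(2) by (rule exp_minus_one_half_le)
    ultimately have "((exp N - 1) + (exp (?L * \<delta>) - 1)) / 2 \<le> N + ?L * \<delta>"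
      by simp
    from mult_left_mono[OF this D0] show ?thesis by simp
  qed
  finally show ?thesis by simp
qed

lemma integral_diff_dual_transfer_le_small_perturbation:
  fixes f :: "'a::metric_space \<Rightarrow> real"
  assumes ics1: "is_ICS X k \<theta>1 F1" and ics2: "is_ICS X k \<theta> F2" and "0 \<le> \<theta>" and "compact X"
    and "0 < k" and nA1: "normalized X F1 A1" and nA2: "normalized X F2 A2"
    and lipA2: "\<exists>L. L-lipschitz_on X A2"
    and mu: "prob_on X \<mu>" and fixed: "dual_transfer X F1 A1 \<mu> = \<mu>"
    and hN: "\<forall>x\<in>X. \<bar>A1 x - A2 x\<bar> \<le> N" and "N < 1" and Ld: "Lip X A2 * d_infty X F1 F2 < 1"
    and f: "1-lipschitz_on X f" and f_range: "\<And>y. y \<in> X \<Longrightarrow> 0 \<le> f y \<and> f y \<le> diameter X"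
  shows "(\<integral>x. f x \<partial>\<mu>) - (\<integral>x. f x \<partial>dual_transfer X F2 A2 \<mu>)
    \<le> diameter X * N + (Lip X A2 * diameter X + 1) * d_infty X F1 F2"
proof (rule field_le_epsilon)
  fix e :: real assume e: "0 < e"
  let ?L = "Lip X A2" and ?D = "diameter X" and ?d = "d_infty X F1 F2"
  have L0: "0 \<le> ?L" by (rule Lip_nonneg[OF lipA2])
  have LD: "0 < ?L * ?D + 1"
    using mult_nonneg_nonneg[OF L0 diameter_ge_0[OF compact_imp_bounded[OF \<open>compact X\<close>]]] by linarith
  have cA2: "continuous_on X A2" using lipA2 lipschitz_on_continuous_on by blast
  \<comment> \<open>Enlarging \<open>d\<^sub>\<infinity>\<close> by \<open>\<epsilon>\<close> makes the infimum attained, while keeping \<open>Lip A\<^sub>2 (d\<^sub>\<infinity> + \<epsilon>) \<le> 1\<close>,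
    the range where \<open>(exp t - 1) / 2 \<le> t\<close>.\<close>
  define \<epsilon> where "\<epsilon> = min ((1 - ?L * ?d) / (?L + 1)) (e / (?L * ?D + 1))"
  have \<epsilon>: "0 < \<epsilon>" "?L * (?d + \<epsilon>) \<le> 1" "(?L * ?D + 1) * \<epsilon> \<le> e"
  proof -
    show "0 < \<epsilon>" unfolding \<epsilon>_def using Ld L0 e LD by simp
    have "?L * \<epsilon> \<le> ?L * ((1 - ?L * ?d) / (?L + 1))"
      unfolding \<epsilon>_def using L0 by (intro mult_left_mono) auto
    also have "\<dots> \<le> 1 - ?L * ?d"
      using L0 Ld by (simp add: field_simps)
    finally show "?L * (?d + \<epsilon>) \<le> 1" by (simp add: algebra_simps)
    have "(?L * ?D + 1) * \<epsilon> \<le> (?L * ?D + 1) * (e / (?L * ?D + 1))"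
      unfolding \<epsilon>_def using LD by (intro mult_left_mono) auto
    then show "(?L * ?D + 1) * \<epsilon> \<le> e" using LD by simp
  qed
  have "(\<integral>x. f x \<partial>\<mu>) \<le> (\<integral>x. f x \<partial>dual_transfer X F2 A2 \<mu>) + (?D * (N + ?L * (?d + \<epsilon>)) + (?d + \<epsilon>))"
    using f_range \<open>N < 1\<close> \<epsilon>(1,2)
    by (intro integral_fixed_point_le_integral_dual_transfer[OF ics1 ics2 assms(3,4) cA2 nA2 mu fixed]
        lipschitz_on_continuous_on[OF f]
        sum_mset_transfer_perturbation_linear[OF ics1 ics2 assms(4,5) nA1 nA2 lipA2 _ hN _ _ _ f]) auto
  moreover have "?D * (N + ?L * (?d + \<epsilon>)) + (?d + \<epsilon>) = ?D * N + (?L * ?D + 1) * ?d + (?L * ?D + 1) * \<epsilon>"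
    by (simp add: algebra_simps)
  ultimately show "(\<integral>x. f x \<partial>\<mu>) - (\<integral>x. f x \<partial>dual_transfer X F2 A2 \<mu>) \<le> ?D * N + (?L * ?D + 1) * ?d + e"
    using \<epsilon>(3) by linarith
qed

lemma le_mult_add_of_one_le:
  fixes D N L d :: real
  assumes "0 \<le> D" "0 \<le> N" "0 \<le> L" "0 \<le> d" and "1 \<le> N \<or> 1 \<le> L * d"
  shows "D \<le> D * N + (L * D + 1) * d"
  using assms(5)
proof
  assume "1 \<le> N"
  then have "D \<le> D * N" using assms(1) by (simp add: mult_le_cancel_left1)
  then show ?thesis using assms(1-4) by (simp add: add_increasing2)
next
  assume "1 \<le> L * d"
  then have "D \<le> D * (L * d)" using assms(1) by (simp add: mult_le_cancel_left1)
  then show ?thesis using mult_nonneg_nonneg[OF assms(1,2)] assms(4) by (simp add: algebra_simps)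
qed

lemma W1_dual_transfer_fixed_point_le:
  fixes A1 A2 :: "'a::metric_space \<Rightarrow> real"
  assumes ics1: "is_ICS X k \<theta>1 F1" and ics2: "is_ICS X k \<theta> F2" and "0 \<le> \<theta>" and "compact X"
    and "0 < k" and nA1: "normalized X F1 A1" and nA2: "normalized X F2 A2"
    and lipA2: "\<exists>L. L-lipschitz_on X A2"
    and mu: "prob_on X \<mu>" and fixed: "dual_transfer X F1 A1 \<mu> = \<mu>"
    and hN: "\<forall>x\<in>X. \<bar>A1 x - A2 x\<bar> \<le> N"
  shows "W1 X \<mu> (dual_transfer X F2 A2 \<mu>)
    \<le> diameter X * N + (Lip X A2 * diameter X + 1) * d_infty X F1 F2"
proof (rule W1_le)
  fix f :: "'a \<Rightarrow> real" assume f: "1-lipschitz_on X f"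
  let ?\<nu> = "dual_transfer X F2 A2 \<mu>"
  let ?L = "Lip X A2" and ?D = "diameter X" and ?d = "d_infty X F1 F2"
  have L0: "0 \<le> ?L" by (rule Lip_nonneg[OF lipA2])
  have D0: "0 \<le> ?D" using \<open>compact X\<close> by (intro diameter_ge_0 compact_imp_bounded)
  have d0: "0 \<le> ?d" by (rule d_infty_nonneg[OF ics1 ics2 \<open>compact X\<close> \<open>0 < k\<close> prob_on_nonempty[OF mu]])
  have N0: "0 \<le> N" using hN prob_on_nonempty[OF mu] abs_ge_zero order_trans by blast
  have nu: "prob_on X ?\<nu>"
    using lipA2 lipschitz_on_continuous_on
    by (intro prob_on_dual_transfer[OF ics2 assms(3,4) _ nA2 mu]) blast
  show "(\<integral>x. f x \<partial>\<mu>) - (\<integral>x. f x \<partial>?\<nu>) \<le> ?D * N + (?L * ?D + 1) * ?d"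
  proof (cases "N < 1 \<and> ?L * ?d < 1")
    case True
    obtain m where m: "\<And>y. y \<in> X \<Longrightarrow> 0 \<le> f y - m \<and> f y - m \<le> ?D"
      using lipschitz_on_1_shift_range[OF \<open>compact X\<close> prob_on_nonempty[OF mu] f] by blast
    have "1-lipschitz_on X (\<lambda>x. f x - m)"
      using lipschitz_on_diff[OF f lipschitz_on_constant] by simp
    then have "(\<integral>x. f x - m \<partial>\<mu>) - (\<integral>x. f x - m \<partial>?\<nu>) \<le> ?D * N + (?L * ?D + 1) * ?d"
      using True m
      by (intro integral_diff_dual_transfer_le_small_perturbation[OF assms(1-11)]) auto
    moreover have "(\<integral>x. f x - m \<partial>\<rho>) = (\<integral>x. f x \<partial>\<rho>) - m" if "prob_on X \<rho>" for \<rho>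
      using that lipschitz_on_continuous_on[OF f]
      by (intro integral_diff_const_prob_space integrable_prob_on_continuous[OF \<open>compact X\<close>])
        (auto simp: prob_on_def)
    ultimately show ?thesis using mu nu by simp
  next
    case False
    \<comment> \<open>Then the right-hand side already exceeds the trivial bound \<open>diameter X\<close>.\<close>
    have "?D \<le> ?D * N + (?L * ?D + 1) * ?d"
      using False D0 N0 L0 d0 by (intro le_mult_add_of_one_le) auto
    then show ?thesis
      using integral_diff_le_diameter[OF \<open>compact X\<close> mu nu f] by linarith
  qed
qed

lemma W1_iterate_le:
  fixes T :: "'a::metric_space measure \<Rightarrow> 'a measure"
  assumes "compact X" and T: "\<And>\<nu>. prob_on X \<nu> \<Longrightarrow> prob_on X (T \<nu>)"
    and contr: "\<And>n \<mu> \<nu>. prob_on X \<mu> \<Longrightarrow> prob_on X \<nu> \<Longrightarrow>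
      W1 X ((T ^^ n) \<mu>) ((T ^^ n) \<nu>) \<le> C * lam ^ n * W1 X \<mu> \<nu>"
    and mu: "prob_on X \<mu>"
  shows "W1 X \<mu> ((T ^^ n) \<mu>) \<le> C * (\<Sum>j<n. lam ^ j) * W1 X \<mu> (T \<mu>)"
proof (induction n)
  case 0
  then show ?case using W1_self[OF \<open>compact X\<close> mu] by simp
next
  case (Suc n)
  have iter: "prob_on X ((T ^^ n) \<nu>)" if "prob_on X \<nu>" for n \<nu>
    using that by (induction n) (auto intro: T)
  have "W1 X \<mu> ((T ^^ Suc n) \<mu>) \<le> W1 X \<mu> ((T ^^ n) \<mu>) + W1 X ((T ^^ n) \<mu>) ((T ^^ n) (T \<mu>))"
    unfolding funpow_Suc_right comp_def
    by (intro W1_triangle[OF \<open>compact X\<close> mu] iter mu T)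
  also have "\<dots> \<le> C * (\<Sum>j<n. lam ^ j) * W1 X \<mu> (T \<mu>) + C * lam ^ n * W1 X \<mu> (T \<mu>)"
    using Suc.IH contr[OF mu T[OF mu]] by (rule add_mono)
  finally show ?case by (simp add: algebra_simps)
qed

lemma W1_le_of_contracting_iterates:
  fixes T :: "'a::metric_space measure \<Rightarrow> 'a measure"
  assumes "compact X" and T: "\<And>\<nu>. prob_on X \<nu> \<Longrightarrow> prob_on X (T \<nu>)"
    and contr: "\<And>n \<mu> \<nu>. prob_on X \<mu> \<Longrightarrow> prob_on X \<nu> \<Longrightarrow>
      W1 X ((T ^^ n) \<mu>) ((T ^^ n) \<nu>) \<le> C * lam ^ n * W1 X \<mu> \<nu>"
    and "0 \<le> C" "0 \<le> lam" "lam < 1"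
    and mu: "prob_on X \<mu>" and nu: "prob_on X \<nu>" and fixed: "T \<nu> = \<nu>"
  shows "W1 X \<mu> \<nu> \<le> C / (1 - lam) * W1 X \<mu> (T \<mu>)"
proof -
  let ?w = "W1 X \<mu> (T \<mu>)"
  have iter: "prob_on X ((T ^^ n) \<mu>)" for n
    by (induction n) (auto intro: T mu)
  have fixed_iter: "(T ^^ n) \<nu> = \<nu>" for n
    by (induction n) (simp_all add: fixed)
  have bound: "W1 X \<mu> \<nu> \<le> C / (1 - lam) * ?w + C * lam ^ n * W1 X \<mu> \<nu>" for n
  proof -
    have "(\<Sum>j<n. lam ^ j) \<le> 1 / (1 - lam)"
      using \<open>0 \<le> lam\<close> \<open>lam < 1\<close> by (simp add: sum_gp_strict divide_right_mono)
    then have "C * (\<Sum>j<n. lam ^ j) * ?w \<le> C * (1 / (1 - lam)) * ?w"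
      using \<open>0 \<le> C\<close> W1_nonneg[OF \<open>compact X\<close> mu T[OF mu]] by (intro mult_right_mono mult_left_mono)
    then have "W1 X \<mu> ((T ^^ n) \<mu>) \<le> C / (1 - lam) * ?w"
      using W1_iterate_le[OF \<open>compact X\<close> T contr mu, of n] by simp
    moreover have "W1 X \<mu> \<nu> \<le> W1 X \<mu> ((T ^^ n) \<mu>) + W1 X ((T ^^ n) \<mu>) ((T ^^ n) \<nu>)"
      using W1_triangle[OF \<open>compact X\<close> mu iter nu] fixed_iter by simp
    ultimately show ?thesis
      using contr[OF mu nu, of n] by linarith
  qed
  have "(\<lambda>n. C / (1 - lam) * ?w + C * lam ^ n * W1 X \<mu> \<nu>) \<longlonglongrightarrow> C / (1 - lam) * ?w + C * 0 * W1 X \<mu> \<nu>"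
    using \<open>0 \<le> lam\<close> \<open>lam < 1\<close> by (intro tendsto_intros LIMSEQ_power_zero) auto
  from LIMSEQ_le_const[OF this] bound show ?thesis by simp
qed

theorem mainTheorem9:
  fixes X :: "'a::metric_space set" and k :: nat
    and F1 F2 :: "'a \<Rightarrow> 'a multiset" and A1 A2 :: "'a \<Rightarrow> real"
    and \<theta> C lam :: real and \<mu>1 \<mu>2 :: "'a measure"
  assumes "compact X" "X \<noteq> {}"
    and "\<exists>\<theta>1. 0 \<le> \<theta>1 \<and> \<theta>1 < 1 \<and> is_ICS X k \<theta>1 F1"
    and "0 < \<theta>" "\<theta> < 1" "is_ICS X k \<theta> F2"
    and "normalized X F1 A1" "normalized X F2 A2"
    and "\<exists>L. L-lipschitz_on X A2"
    and "prob_on X \<mu>1" "dual_transfer X F1 A1 \<mu>1 = \<mu>1"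
    and "\<forall>\<nu>. prob_on X \<nu> \<and> dual_transfer X F1 A1 \<nu> = \<nu> \<longrightarrow> \<nu> = \<mu>1"
    and "prob_on X \<mu>2" "dual_transfer X F2 A2 \<mu>2 = \<mu>2"
    and "\<forall>\<nu>. prob_on X \<nu> \<and> dual_transfer X F2 A2 \<nu> = \<nu> \<longrightarrow> \<nu> = \<mu>2"
    and "C > 0" "0 < lam" "lam < 1"
    and "\<forall>n \<mu> \<nu>. prob_on X \<mu> \<and> prob_on X \<nu> \<longrightarrow>
           W1 X ((dual_transfer X F2 A2 ^^ n) \<mu>) ((dual_transfer X F2 A2 ^^ n) \<nu>)
             \<le> C * lam ^ n * W1 X \<mu> \<nu>"
  shows "\<forall>N. (\<forall>x\<in>X. \<bar>A1 x - A2 x\<bar> \<le> N) \<longrightarrow>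
           W1 X \<mu>1 \<mu>2 \<le> C / (1 - lam) * (diameter X * N
              + (Lip X A2 * diameter X + 1) * d_infty X F1 F2)"
proof (intro allI impI)
  fix N assume hN: "\<forall>x\<in>X. \<bar>A1 x - A2 x\<bar> \<le> N"
  obtain \<theta>1 where ics1: "is_ICS X k \<theta>1 F1" using assms(3) by blast
  have \<theta>: "0 \<le> \<theta>" using assms(4) by simp
  have cA2: "continuous_on X A2" using assms(9) lipschitz_on_continuous_on by blast
  have k: "0 < k" by (rule is_ICS_normalized_pos[OF assms(6,8,2)])
  have T: "prob_on X (dual_transfer X F2 A2 \<nu>)" if "prob_on X \<nu>" for \<nu>
    by (rule prob_on_dual_transfer[OF assms(6) \<theta> assms(1) cA2 assms(8) that])
  have contr: "\<And>n \<mu> \<nu>. prob_on X \<mu> \<Longrightarrow> prob_on X \<nu> \<Longrightarrow>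
      W1 X ((dual_transfer X F2 A2 ^^ n) \<mu>) ((dual_transfer X F2 A2 ^^ n) \<nu>) \<le> C * lam ^ n * W1 X \<mu> \<nu>"
    using assms(19) by blast
  have "W1 X \<mu>1 \<mu>2 \<le> C / (1 - lam) * W1 X \<mu>1 (dual_transfer X F2 A2 \<mu>1)"
    using assms(16-18)
    by (intro W1_le_of_contracting_iterates[where T="dual_transfer X F2 A2", OF assms(1) T contr _ _ _
          assms(10,13,14)]) auto
  also have "\<dots> \<le> C / (1 - lam) * (diameter X * N + (Lip X A2 * diameter X + 1) * d_infty X F1 F2)"
    using assms(16,18)
    by (intro mult_left_mono W1_dual_transfer_fixed_point_le[OF ics1 assms(6) \<theta> assms(1) k assms(7-11) hN])
      auto
  finally show "W1 X \<mu>1 \<mu>2 \<le> C / (1 - lam) * (diameter X * N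
      + (Lip X A2 * diameter X + 1) * d_infty X F1 F2)" .
qed

end
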